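(* Let $B$ be a board with specified sink locations. Then $B$ admits a perfect layout if and only if it is possible to assign a color to each non-sink cell of $B$ such that, for every color $i$, the graph $G_i$ is connected.
   Context: A board is an $m\times n$ grid of unit cells in which exactly $c$ cells are sinks, one of each of $c$ colors, and all other cells are empty. A layout places, in some of the empty cells, arrows, each having one of the $c$ colors and one of the four cardinal directions. A packet of color $i$ may enter the grid through any unit edge of the outer boundary of the grid, into the adjacent cell, moving perpendicular to that edge into the grid; it moves one cell at a time in its current direction, and whenever it enters a cell containing an arrow of color $i$ its direction becomes that arrow's direction (arrows of other colors are ignored). The packet succeeds if it enters the sink of color $i$; it fails if it enters a sink of another color, leaves the grid, or travels forever without reaching a sink. A perfect layout is a layout in which every packet of every color entering through every boundary edge succeeds. Given a coloring of all cells of $B$ that agrees with the colors of the sinks, let $C_i$ be the set of cells of color $i$ (including the sink of color $i$) and $\partial B$ the set of unit edges on the boundary of $B$. Two cells of $C_i$, or a cell of $C_i$ and a boundary edge $e\in\partial B$, are visible to each other if they lie in the same row or same column (for a boundary edge: it is an end edge of that row or column) and no sink of a color other than $i$ lies strictly between them. $G_i$ is the graph on vertex set $C_i\cup\partial B$ with an edge between every pair of mutually visible vertices. *)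

theory Defs
  imports Main
begin

text \<open>Cells are pairs (row, column) of integers; the board is the m x n grid
  {0..<m} x {0..<n}.  Colours are the naturals 0..<c; sink i is the sink of colour i.\<close>

datatype dir = North | South | East | West

definition delta :: "dir \<Rightarrow> int \<times> int" where
  "delta d = (case d of North \<Rightarrow> (-1, 0) | South \<Rightarrow> (1, 0) | East \<Rightarrow> (0, 1) | West \<Rightarrow> (0, -1))"

definition shift :: "int \<times> int \<Rightarrow> dir \<Rightarrow> int \<Rightarrow> int \<times> int" where
  "shift p d t = (fst p + t * fst (delta d), snd p + t * snd (delta d))"

definition grid :: "nat \<Rightarrow> nat \<Rightarrow> (int \<times> int) set" where
  "grid m n = {p. 0 \<le> fst p \<and> fst p < int m \<and> 0 \<le> snd p \<and> snd p < int n}"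

definition board :: "nat \<Rightarrow> nat \<Rightarrow> nat \<Rightarrow> (nat \<Rightarrow> int \<times> int) \<Rightarrow> bool" where
  "board m n c sink \<longleftrightarrow> inj_on sink {..<c} \<and> sink ` {..<c} \<subseteq> grid m n"

definition is_sink :: "nat \<Rightarrow> (nat \<Rightarrow> int \<times> int) \<Rightarrow> int \<times> int \<Rightarrow> bool" where
  "is_sink c sink p \<longleftrightarrow> (\<exists>j<c. sink j = p)"

text \<open>Boundary edges of the grid, each represented by the adjacent cell together with the
  direction pointing into the grid (perpendicular to the edge).\<close>
definition boundary_edges :: "nat \<Rightarrow> nat \<Rightarrow> ((int \<times> int) \<times> dir) set" where
  "boundary_edges m n =
     {((r, 0), East) | r. 0 \<le> r \<and> r < int m \<and> 0 < n} \<union>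
     {((r, int n - 1), West) | r. 0 \<le> r \<and> r < int m \<and> 0 < n} \<union>
     {((0, k), South) | k. 0 \<le> k \<and> k < int n \<and> 0 < m} \<union>
     {((int m - 1, k), North) | k. 0 \<le> k \<and> k < int n \<and> 0 < m}"

type_synonym layout = "int \<times> int \<Rightarrow> (nat \<times> dir) option"

definition valid_layout :: "nat \<Rightarrow> nat \<Rightarrow> nat \<Rightarrow> (nat \<Rightarrow> int \<times> int) \<Rightarrow> layout \<Rightarrow> bool" where
  "valid_layout m n c sink L \<longleftrightarrow>
     (\<forall>p a d. L p = Some (a, d) \<longrightarrow> p \<in> grid m n \<and> \<not> is_sink c sink p \<and> a < c)"

definition eff_dir :: "layout \<Rightarrow> nat \<Rightarrow> int \<times> int \<Rightarrow> dir \<Rightarrow> dir" where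
  "eff_dir L i p d = (case L p of Some (a, d') \<Rightarrow> (if a = i then d' else d) | None \<Rightarrow> d)"

text \<open>State = (cell just entered, direction of motion when entering it).\<close>
definition pstep :: "layout \<Rightarrow> nat \<Rightarrow> (int \<times> int) \<times> dir \<Rightarrow> (int \<times> int) \<times> dir" where
  "pstep L i s = (let d' = eff_dir L i (fst s) (snd s) in (shift (fst s) d' 1, d'))"

definition traj :: "layout \<Rightarrow> nat \<Rightarrow> (int \<times> int) \<times> dir \<Rightarrow> nat \<Rightarrow> (int \<times> int) \<times> dir" where
  "traj L i e k = (pstep L i ^^ k) e"

definition succeeds :: "nat \<Rightarrow> nat \<Rightarrow> nat \<Rightarrow> (nat \<Rightarrow> int \<times> int) \<Rightarrow> layout \<Rightarrow> nat
    \<Rightarrow> (int \<times> int) \<times> dir \<Rightarrow> bool" where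
  "succeeds m n c sink L i e \<longleftrightarrow>
     (\<exists>k. fst (traj L i e k) = sink i \<and>
          (\<forall>j<k. fst (traj L i e j) \<in> grid m n \<and> \<not> is_sink c sink (fst (traj L i e j))))"

definition perfect_layout :: "nat \<Rightarrow> nat \<Rightarrow> nat \<Rightarrow> (nat \<Rightarrow> int \<times> int) \<Rightarrow> layout \<Rightarrow> bool" where
  "perfect_layout m n c sink L \<longleftrightarrow> valid_layout m n c sink L \<and>
     (\<forall>i<c. \<forall>e\<in>boundary_edges m n. succeeds m n c sink L i e)"

definition coloring :: "nat \<Rightarrow> nat \<Rightarrow> nat \<Rightarrow> (nat \<Rightarrow> int \<times> int) \<Rightarrow> (int \<times> int \<Rightarrow> nat) \<Rightarrow> bool" where
  "coloring m n c sink col \<longleftrightarrow> (\<forall>p\<in>grid m n. col p < c) \<and> (\<forall>j<c. col (sink j) = j)"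

definition color_class :: "nat \<Rightarrow> nat \<Rightarrow> (int \<times> int \<Rightarrow> nat) \<Rightarrow> nat \<Rightarrow> (int \<times> int) set" where
  "color_class m n col i = {p \<in> grid m n. col p = i}"

definition other_sink :: "nat \<Rightarrow> (nat \<Rightarrow> int \<times> int) \<Rightarrow> nat \<Rightarrow> int \<times> int \<Rightarrow> bool" where
  "other_sink c sink i x \<longleftrightarrow> (\<exists>j<c. j \<noteq> i \<and> sink j = x)"

definition strictly_between :: "int \<times> int \<Rightarrow> int \<times> int \<Rightarrow> int \<times> int \<Rightarrow> bool" where
  "strictly_between p q x \<longleftrightarrow>
     (fst p = fst q \<and> fst x = fst p \<and> min (snd p) (snd q) < snd x \<and> snd x < max (snd p) (snd q)) \<or>
     (snd p = snd q \<and> snd x = snd p \<and> min (fst p) (fst q) < fst x \<and> fst x < max (fst p) (fst q))"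

definition cells_visible :: "nat \<Rightarrow> (nat \<Rightarrow> int \<times> int) \<Rightarrow> nat \<Rightarrow> int \<times> int \<Rightarrow> int \<times> int \<Rightarrow> bool" where
  "cells_visible c sink i p q \<longleftrightarrow> p \<noteq> q \<and> (fst p = fst q \<or> snd p = snd q) \<and>
     (\<forall>x. strictly_between p q x \<longrightarrow> \<not> other_sink c sink i x)"

text \<open>Cell p and boundary edge e = (q, d): p lies in the row/column of which e is an end edge
  (p = q + t*d, t \<ge> 0), and no sink of another colour lies strictly between them, i.e. among
  the cells q + s*d, 0 \<le> s < t.\<close>
definition edge_visible :: "nat \<Rightarrow> (nat \<Rightarrow> int \<times> int) \<Rightarrow> nat \<Rightarrow> int \<times> int \<Rightarrow> (int \<times> int) \<times> dir \<Rightarrow> bool" where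
  "edge_visible c sink i p e \<longleftrightarrow> (\<exists>t\<ge>0. p = shift (fst e) (snd e) t \<and>
     (\<forall>s. 0 \<le> s \<and> s < t \<longrightarrow> \<not> other_sink c sink i (shift (fst e) (snd e) s)))"

text \<open>The graph G_i on vertex set C_i \<union> \<partial>B (cells as Inl, boundary edges as Inr).\<close>
definition G_adj :: "nat \<Rightarrow> nat \<Rightarrow> nat \<Rightarrow> (nat \<Rightarrow> int \<times> int) \<Rightarrow> (int \<times> int \<Rightarrow> nat) \<Rightarrow> nat
    \<Rightarrow> (int \<times> int) + ((int \<times> int) \<times> dir) \<Rightarrow> (int \<times> int) + ((int \<times> int) \<times> dir) \<Rightarrow> bool" where
  "G_adj m n c sink col i u v \<longleftrightarrow>
     (case (u, v) of
        (Inl p, Inl q) \<Rightarrow> p \<in> color_class m n col i \<and> q \<in> color_class m n col i \<and> cells_visible c sink i p q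
      | (Inl p, Inr e) \<Rightarrow> p \<in> color_class m n col i \<and> e \<in> boundary_edges m n \<and> edge_visible c sink i p e
      | (Inr e, Inl p) \<Rightarrow> p \<in> color_class m n col i \<and> e \<in> boundary_edges m n \<and> edge_visible c sink i p e
      | (Inr _, Inr _) \<Rightarrow> False)"

definition G_vertices :: "nat \<Rightarrow> nat \<Rightarrow> (int \<times> int \<Rightarrow> nat) \<Rightarrow> nat \<Rightarrow> ((int \<times> int) + ((int \<times> int) \<times> dir)) set" where
  "G_vertices m n col i = color_class m n col i <+> boundary_edges m n"

definition G_connected :: "nat \<Rightarrow> nat \<Rightarrow> nat \<Rightarrow> (nat \<Rightarrow> int \<times> int) \<Rightarrow> (int \<times> int \<Rightarrow> nat) \<Rightarrow> nat \<Rightarrow> bool" where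
  "G_connected m n c sink col i \<longleftrightarrow>
     (\<forall>u\<in>G_vertices m n col i. \<forall>v\<in>G_vertices m n col i. (G_adj m n c sink col i)\<^sup>*\<^sup>* u v)"

end

theory Submission
  imports Defs
begin

text \<open>
  If a perfect layout exists, colour each empty cell with the colour of its arrow when a packet of
  that colour passes through it, and otherwise with a colour whose sink or some boundary edge it
  sees (looking north always finds one).  A packet of colour \<open>i\<close> entering through an edge
  \<open>e\<close> turns only at arrows of colour \<open>i\<close>, which are then cells of colour \<open>i\<close>; between two
  turns it runs along a ray meeting no foreign sink, so the cells where it turns form a path of
  \<open>G\<^sub>i\<close> from \<open>e\<close> to the sink of colour \<open>i\<close>, and every remaining vertex is adjacent to such a
  path, to a boundary edge or to the sink.

  Conversely, given such a colouring, grade the cells of colour \<open>i\<close> by a breadth-first search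
  from the sink: a cell has level \<open>k + 1\<close> if in some direction the first cell of colour \<open>i\<close>,
  reached across empty cells only, has level \<open>k\<close>.  Connectivity of \<open>G\<^sub>i\<close> makes every cell of
  colour \<open>i\<close> graded and every boundary edge look at a graded cell.  Arrows pointing down the
  levels then route every packet: it crosses cells of other colours straight until it meets a
  cell of its colour and then descends the levels to its sink.
\<close>

type_synonym vertex = "(int \<times> int) + ((int \<times> int) \<times> dir)"

section \<open>Visibility along rays\<close>

lemma shift_0 [simp]: "shift p d 0 = p"
  by (simp add: shift_def)

lemma shift_shift [simp]: "shift (shift p d a) d b = shift p d (a + b)"
  by (simp add: shift_def algebra_simps)

lemma shift_simps:
  "shift p North t = (fst p - t, snd p)"
  "shift p South t = (fst p + t, snd p)"
  "shift p East t = (fst p, snd p + t)"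
  "shift p West t = (fst p, snd p - t)"
  by (simp_all add: shift_def delta_def)

lemma shift_eq_iff [simp]: "shift p d a = shift p d b \<longleftrightarrow> a = b"
  by (cases d) (auto simp: shift_simps prod_eq_iff)

lemma aligned_imp_shift:
  assumes "p \<noteq> q" and "fst p = fst q \<or> snd p = snd q"
  obtains d t where "0 < t" and "q = shift p d (int t)"
proof -
  define t where "t = nat (\<bar>fst q - fst p\<bar> + \<bar>snd q - snd p\<bar>)"
  have "0 < t" using assms by (auto simp: t_def prod_eq_iff)
  moreover have "\<exists>d. q = shift p d (int t)"
  proof (cases "fst p = fst q")
    case True
    then show ?thesis
      by (cases "snd p < snd q")
        (auto simp: t_def shift_simps prod_eq_iff intro: exI[of _ East] exI[of _ West])
  next
    case False
    then show ?thesis using assms(2)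
      by (cases "fst p < fst q")
        (auto simp: t_def shift_simps prod_eq_iff intro: exI[of _ South] exI[of _ North])
  qed
  ultimately show ?thesis using that by blast
qed

lemma strictly_between_shift_iff:
  "strictly_between p (shift p d (int t)) x \<longleftrightarrow> (\<exists>s. 0 < s \<and> s < t \<and> x = shift p d (int s))"
proof
  assume "strictly_between p (shift p d (int t)) x"
  then show "\<exists>s. 0 < s \<and> s < t \<and> x = shift p d (int s)"
    by (intro exI[of _ "nat (\<bar>fst x - fst p\<bar> + \<bar>snd x - snd p\<bar>)"])
      (cases d; auto simp: strictly_between_def shift_simps prod_eq_iff)
qed (cases d; auto simp: strictly_between_def shift_simps)

definition clear_ray :: "nat \<Rightarrow> (nat \<Rightarrow> int \<times> int) \<Rightarrow> nat \<Rightarrow> int \<times> int \<Rightarrow> dir \<Rightarrow> nat \<Rightarrow> bool" where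
  "clear_ray c sink i p d t \<longleftrightarrow> (\<forall>s. 0 < s \<and> s < t \<longrightarrow> \<not> other_sink c sink i (shift p d (int s)))"

lemma clear_ray_Suc:
  "clear_ray c sink i p d t \<Longrightarrow> \<not> other_sink c sink i (shift p d (int t))
    \<Longrightarrow> clear_ray c sink i p d (Suc t)"
  by (auto simp: clear_ray_def less_Suc_eq)

lemma clear_ray_drop:
  assumes "clear_ray c sink i p d t" and "u \<le> t"
  shows "clear_ray c sink i (shift p d (int u)) d (t - u)"
  unfolding clear_ray_def
proof (intro allI impI)
  fix s assume "0 < s \<and> s < t - u"
  then show "\<not> other_sink c sink i (shift (shift p d (int u)) d (int s))"
    using assms by (auto simp: clear_ray_def dest: spec[of _ "u + s"])
qed

lemma cells_visible_iff_ray: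
  "cells_visible c sink i p q \<longleftrightarrow> (\<exists>d t. 0 < t \<and> q = shift p d (int t) \<and> clear_ray c sink i p d t)"
proof
  assume vis: "cells_visible c sink i p q"
  then obtain d t where "0 < t" and q: "q = shift p d (int t)"
    by (auto simp: cells_visible_def elim: aligned_imp_shift)
  moreover have "clear_ray c sink i p d t"
    unfolding clear_ray_def
  proof (intro allI impI)
    fix s assume "0 < s \<and> s < t"
    then have "strictly_between p q (shift p d (int s))"
      by (auto simp: q strictly_between_shift_iff)
    then show "\<not> other_sink c sink i (shift p d (int s))"
      using vis unfolding cells_visible_def by blast
  qed
  ultimately show "\<exists>d t. 0 < t \<and> q = shift p d (int t) \<and> clear_ray c sink i p d t" by blast
next
  assume "\<exists>d t. 0 < t \<and> q = shift p d (int t) \<and> clear_ray c sink i p d t"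
  then obtain d t where t: "0 < t" and q: "q = shift p d (int t)"
    and clear: "clear_ray c sink i p d t" by blast
  have "p \<noteq> q" using t q shift_eq_iff[of p d 0 "int t"] by auto
  moreover have "fst p = fst q \<or> snd p = snd q" using q by (cases d) (auto simp: shift_simps)
  moreover have "\<not> other_sink c sink i x" if "strictly_between p q x" for x
    using that clear by (auto simp: q strictly_between_shift_iff clear_ray_def)
  ultimately show "cells_visible c sink i p q" by (simp add: cells_visible_def)
qed

text \<open>A boundary edge behaves like a cell just outside the grid, looking into it.\<close>
definition edge_outer_cell :: "(int \<times> int) \<times> dir \<Rightarrow> int \<times> int" where
  "edge_outer_cell e = shift (fst e) (snd e) (-1)"

lemma shift_edge_outer_cell: "shift (edge_outer_cell e) (snd e) u = shift (fst e) (snd e) (u - 1)"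
  by (simp add: edge_outer_cell_def)

lemma edge_visible_iff_ray:
  "edge_visible c sink i p e \<longleftrightarrow>
     (\<exists>t. 0 < t \<and> p = shift (edge_outer_cell e) (snd e) (int t) \<and>
        clear_ray c sink i (edge_outer_cell e) (snd e) t)" (is "_ \<longleftrightarrow> ?ray")
proof
  assume "edge_visible c sink i p e"
  then obtain t where "t \<ge> 0" "p = shift (fst e) (snd e) t"
    and clear: "\<forall>s. 0 \<le> s \<and> s < t \<longrightarrow> \<not> other_sink c sink i (shift (fst e) (snd e) s)"
    by (auto simp: edge_visible_def)
  then show ?ray
    by (intro exI[of _ "nat t + 1"]) (auto simp: shift_edge_outer_cell clear_ray_def)
next
  assume ?ray
  then obtain t where "0 < t" "p = shift (edge_outer_cell e) (snd e) (int t)"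
    and clear: "clear_ray c sink i (edge_outer_cell e) (snd e) t" by blast
  moreover have "\<not> other_sink c sink i (shift (fst e) (snd e) s)" if "0 \<le> s" "s < int t - 1" for s
    using clear[unfolded clear_ray_def, rule_format, of "nat (s + 1)"] that
    by (simp add: shift_edge_outer_cell)
  ultimately show "edge_visible c sink i p e"
    unfolding edge_visible_def by (intro exI[of _ "int t - 1"]) (auto simp: shift_edge_outer_cell)
qed

lemma grid_convex:
  "shift p d (int a) \<in> grid m n \<Longrightarrow> shift p d (int b) \<in> grid m n \<Longrightarrow> a \<le> s \<Longrightarrow> s \<le> b
    \<Longrightarrow> shift p d (int s) \<in> grid m n"
  by (cases d) (auto simp: grid_def shift_simps)

lemma boundary_edge_in_grid: "e \<in> boundary_edges m n \<Longrightarrow> fst e \<in> grid m n"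
  by (auto simp: boundary_edges_def grid_def)

lemma other_sink_imp_is_sink: "other_sink c sink i x \<Longrightarrow> is_sink c sink x"
  by (auto simp: other_sink_def is_sink_def)

lemma strictly_between_commute: "strictly_between p q x \<longleftrightarrow> strictly_between q p x"
  by (auto simp: strictly_between_def min.commute max.commute)

lemma cells_visible_commute: "cells_visible c sink i p q \<longleftrightarrow> cells_visible c sink i q p"
  unfolding cells_visible_def using strictly_between_commute by metis

lemma symp_G_adj: "symp (G_adj m n c sink col i)"
proof (rule sympI)
  fix u v assume "G_adj m n c sink col i u v"
  then show "G_adj m n c sink col i v u"
    by (cases u; cases v) (auto simp: G_adj_def cells_visible_commute)
qed

lemma traj_0 [simp]: "traj L i st 0 = st"
  by (simp add: traj_def)

lemma traj_Suc: "traj L i st (Suc k) = pstep L i (traj L i st k)"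
  by (simp add: traj_def)

lemma traj_add: "traj L i st (k + l) = traj L i (traj L i st k) l"
  unfolding traj_def by (metis add.commute comp_apply funpow_add)

lemma succeeds_traj:
  assumes "succeeds m n c sink L i (traj L i st k)"
    and "\<forall>j<k. fst (traj L i st j) \<in> grid m n \<and> \<not> is_sink c sink (fst (traj L i st j))"
  shows "succeeds m n c sink L i st"
proof -
  obtain l where "fst (traj L i st (k + l)) = sink i"
    and "\<forall>j<l. fst (traj L i st (k + j)) \<in> grid m n \<and> \<not> is_sink c sink (fst (traj L i st (k + j)))"
    using assms(1) by (auto simp: succeeds_def traj_add)
  moreover have "fst (traj L i st j) \<in> grid m n \<and> \<not> is_sink c sink (fst (traj L i st j))"
    if "j < k + l" for j
  proof -
    consider "j < k" | j' where "j = k + j'" "j' < l"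
      using \<open>j < k + l\<close> by (metis add_less_cancel_left le_add_diff_inverse not_less)
    then show ?thesis by cases (use assms(2) \<open>\<forall>j<l. _\<close> in auto)
  qed
  ultimately show ?thesis unfolding succeeds_def by blast
qed

section \<open>The routing layout of a connected colouring\<close>

locale connected_coloring =
  fixes m n c :: nat and sink :: "nat \<Rightarrow> int \<times> int" and col :: "int \<times> int \<Rightarrow> nat"
  assumes board: "board m n c sink"
    and coloring: "coloring m n c sink col"
    and connected: "\<forall>i<c. G_connected m n c sink col i"
begin

lemma sink_in_class: "i < c \<Longrightarrow> sink i \<in> color_class m n col i"
  using board coloring by (auto simp: board_def coloring_def color_class_def)

lemma sink_in_class_unique: "is_sink c sink p \<Longrightarrow> p \<in> color_class m n col i \<Longrightarrow> p = sink i"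
  using coloring by (auto simp: is_sink_def coloring_def color_class_def)

lemma other_sink_if_is_sink: "is_sink c sink x \<Longrightarrow> col x \<noteq> i \<Longrightarrow> other_sink c sink i x"
  using coloring by (auto simp: is_sink_def other_sink_def coloring_def)

definition first_hit :: "nat \<Rightarrow> int \<times> int \<Rightarrow> dir \<Rightarrow> int \<times> int \<Rightarrow> bool" where
  "first_hit i p d q \<longleftrightarrow> (\<exists>t>0. q = shift p d (int t) \<and> q \<in> color_class m n col i \<and>
     (\<forall>s. 0 < s \<and> s < t \<longrightarrow> shift p d (int s) \<in> grid m n \<and>
        \<not> is_sink c sink (shift p d (int s)) \<and> col (shift p d (int s)) \<noteq> i))"

text \<open>Chains of first hits ending at the sink of colour \<open>i\<close>; the shortest one gives the level
  of a cell in the breadth-first search.\<close>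
inductive routed :: "nat \<Rightarrow> int \<times> int \<Rightarrow> nat \<Rightarrow> bool" for i :: nat where
  at_sink: "routed i (sink i) 0"
| via_hit: "routed i q k \<Longrightarrow> first_hit i p d q \<Longrightarrow> p \<in> color_class m n col i \<Longrightarrow> \<not> is_sink c sink p
    \<Longrightarrow> routed i p (Suc k)"

lemma routed_in_class: "routed i p k \<Longrightarrow> i < c \<Longrightarrow> p \<in> color_class m n col i"
  by (induction rule: routed.induct) (auto simp: sink_in_class)

lemma routed_if_first_hit:
  assumes "routed i q k" "first_hit i p d q" "p \<in> color_class m n col i"
  shows "\<exists>k. routed i p k"
proof (cases "is_sink c sink p")
  case True
  then show ?thesis using assms(3) sink_in_class_unique routed.at_sink by blast
next
  case False
  then show ?thesis using assms routed.via_hit by blast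
qed

lemma obtain_first_hit:
  assumes i: "i < c" and start: "shift p d 1 \<in> grid m n"
    and q: "q = shift p d (int t)" "q \<in> color_class m n col i" "0 < t"
    and clear: "clear_ray c sink i p d t"
  obtains u where "0 < u" "u \<le> t" "first_hit i p d (shift p d (int u))"
proof -
  define u where "u = (LEAST u. 0 < u \<and> shift p d (int u) \<in> color_class m n col i)"
  have t: "0 < t \<and> shift p d (int t) \<in> color_class m n col i" using q by simp
  have u: "0 < u \<and> shift p d (int u) \<in> color_class m n col i"
    unfolding u_def by (rule LeastI[of _ t], rule t)
  have "u \<le> t"
    unfolding u_def by (rule Least_le[of _ t], rule t)
  have "shift p d (int s) \<in> grid m n \<and> \<not> is_sink c sink (shift p d (int s)) \<and>
      col (shift p d (int s)) \<noteq> i" if s: "0 < s" "s < u" for s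
  proof -
    have grid: "shift p d (int s) \<in> grid m n"
      using grid_convex[of p d 1 m n t s] start q s \<open>u \<le> t\<close> by (auto simp: color_class_def)
    moreover have "col (shift p d (int s)) \<noteq> i"
      using not_less_Least[of s "\<lambda>u. 0 < u \<and> shift p d (int u) \<in> color_class m n col i"] s grid
      by (auto simp: u_def color_class_def)
    moreover have "\<not> is_sink c sink (shift p d (int s))"
      using other_sink_if_is_sink[OF _ calculation(2)] clear s \<open>u \<le> t\<close>
      unfolding clear_ray_def by auto
    ultimately show ?thesis by blast
  qed
  then show ?thesis using that[of u] u \<open>u \<le> t\<close> unfolding first_hit_def by blast
qed

lemma routed_along_ray:
  assumes i: "i < c"
  shows "routed i q k \<Longrightarrow> q = shift p d (int t) \<Longrightarrow> 0 < t \<Longrightarrow> shift p d 1 \<in> grid m n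
    \<Longrightarrow> clear_ray c sink i p d t \<Longrightarrow> \<exists>r k. first_hit i p d r \<and> routed i r k"
proof (induction t arbitrary: p rule: less_induct)
  case (less t p)
  have q: "q \<in> color_class m n col i" using routed_in_class[OF less.prems(1) i] .
  obtain u where u: "0 < u" "u \<le> t" "first_hit i p d (shift p d (int u))"
    using obtain_first_hit[OF i less.prems(4) less.prems(2) q less.prems(3,5)] by blast
  show ?case
  proof (cases "u = t")
    case True
    with u(3) less.prems(1,2) show ?thesis by blast
  next
    case False
    define r where "r = shift p d (int u)"
    have r: "r \<in> color_class m n col i" using u(3) by (auto simp: first_hit_def r_def)
    have "\<exists>r' k. first_hit i r d r' \<and> routed i r' k"
    proof (rule less.IH[of "t - u" r])
      show "t - u < t" "0 < t - u" using u False by auto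
      show "q = shift r d (int (t - u))" using less.prems(2) u(2) by (simp add: r_def of_nat_diff)
      show "shift r d 1 \<in> grid m n"
        using grid_convex[of p d 1 m n t "u + 1"] less.prems(4) q u(2) False
        by (auto simp: r_def less.prems(2) color_class_def add.commute)
      show "clear_ray c sink i r d (t - u)"
        using clear_ray_drop[OF less.prems(5) u(2)] by (simp add: r_def)
    qed (rule less.prems(1))
    then have "\<exists>k. routed i r k" using routed_if_first_hit[OF _ _ r] by blast
    then show ?thesis using u(3) r_def by blast
  qed
qed

lemma routed_if_visible:
  assumes i: "i < c" and "routed i q k" and "cells_visible c sink i p q"
    and p: "p \<in> color_class m n col i"
  shows "\<exists>k. routed i p k"
proof -
  obtain d t where t: "0 < t" "q = shift p d (int t)" "clear_ray c sink i p d t"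
    using assms(3) by (auto simp: cells_visible_iff_ray)
  have "shift p d 1 \<in> grid m n"
    using grid_convex[of p d 0 m n t 1] p routed_in_class[OF assms(2) i] t
    by (auto simp: color_class_def)
  then obtain r k' where "first_hit i p d r" "routed i r k'"
    using routed_along_ray[OF i assms(2) t(2,1) _ t(3)] by blast
  then show ?thesis using routed_if_first_hit[OF _ _ p] by blast
qed

lemma routed_beyond_first_hit:
  assumes i: "i < c" and hit: "first_hit i p d r" and "routed i r k"
    and q: "q = shift p d (int t)" "0 < t" "q \<in> color_class m n col i"
    and clear: "clear_ray c sink i p d t"
  shows "\<exists>k. routed i q k"
proof -
  obtain u where u: "r = shift p d (int u)" "0 < u"
    and passed: "\<forall>s. 0 < s \<and> s < u \<longrightarrow> col (shift p d (int s)) \<noteq> i"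
    using hit by (auto simp: first_hit_def)
  have "\<not> t < u" using passed q by (auto simp: color_class_def)
  show ?thesis
  proof (cases "u = t")
    case True
    then show ?thesis using assms(3) q u by blast
  next
    case False
    with \<open>\<not> t < u\<close> have "0 < t - u" "q = shift r d (int (t - u))"
      by (auto simp: u q of_nat_diff)
    moreover have "clear_ray c sink i r d (t - u)"
      using clear_ray_drop[OF clear] \<open>\<not> t < u\<close> by (simp add: u)
    ultimately have "cells_visible c sink i q r"
      using cells_visible_commute cells_visible_iff_ray by blast
    then show ?thesis using routed_if_visible[OF i assms(3) _ q(3)] by blast
  qed
qed

definition routed_vertex :: "nat \<Rightarrow> vertex \<Rightarrow> bool" where
  "routed_vertex i v \<longleftrightarrow> (case v of
      Inl p \<Rightarrow> \<exists>k. routed i p k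
    | Inr e \<Rightarrow> \<exists>r k. first_hit i (edge_outer_cell e) (snd e) r \<and> routed i r k)"

lemma routed_vertex_adj:
  assumes i: "i < c" and adj: "G_adj m n c sink col i u v" and "routed_vertex i u"
  shows "routed_vertex i v"
proof (cases u; cases v)
  fix p q assume uv: "u = Inl p" "v = Inl q"
  then have "cells_visible c sink i q p" "q \<in> color_class m n col i"
    using adj cells_visible_commute by (auto simp: G_adj_def)
  moreover obtain k where "routed i p k" using assms(3) uv by (auto simp: routed_vertex_def)
  ultimately show ?thesis using routed_if_visible[OF i] uv by (auto simp: routed_vertex_def)
next
  fix p e assume uv: "u = Inl p" "v = Inr e"
  then obtain t where t: "0 < t" "p = shift (edge_outer_cell e) (snd e) (int t)"
    and clear: "clear_ray c sink i (edge_outer_cell e) (snd e) t" and e: "e \<in> boundary_edges m n"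
    using adj by (auto simp: G_adj_def edge_visible_iff_ray)
  obtain k where p: "routed i p k" using assms(3) uv by (auto simp: routed_vertex_def)
  have "shift (edge_outer_cell e) (snd e) 1 \<in> grid m n"
    using boundary_edge_in_grid[OF e] by (simp add: shift_edge_outer_cell)
  then show ?thesis
    using routed_along_ray[OF i p t(2,1) _ clear] uv by (simp add: routed_vertex_def)
next
  fix e p assume uv: "u = Inr e" "v = Inl p"
  then obtain t where t: "0 < t" "p = shift (edge_outer_cell e) (snd e) (int t)"
    and clear: "clear_ray c sink i (edge_outer_cell e) (snd e) t" and p: "p \<in> color_class m n col i"
    using adj by (auto simp: G_adj_def edge_visible_iff_ray)
  obtain r k where "first_hit i (edge_outer_cell e) (snd e) r" "routed i r k"
    using assms(3) uv by (auto simp: routed_vertex_def)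
  then show ?thesis using routed_beyond_first_hit[OF i _ _ t(2,1) p clear] uv
    by (simp add: routed_vertex_def)
next
  fix e e' assume "u = Inr e" "v = Inr e'"
  then show ?thesis using adj by (simp add: G_adj_def)
qed

lemma all_vertices_routed:
  assumes i: "i < c" and v: "v \<in> G_vertices m n col i"
  shows "routed_vertex i v"
proof -
  have "(G_adj m n c sink col i)\<^sup>*\<^sup>* (Inl (sink i)) v"
    using connected i v sink_in_class[OF i] by (auto simp: G_connected_def G_vertices_def)
  then show ?thesis
  proof (induction rule: rtranclp_induct)
    case base
    then show ?case by (auto simp: routed_vertex_def intro: routed.at_sink)
  qed (rule routed_vertex_adj[OF i])
qed

lemma routed_0_imp_sink: "routed i p 0 \<Longrightarrow> p = sink i"
  by (cases rule: routed.cases) auto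

lemma routed_SucE:
  assumes "routed i p (Suc k)"
  obtains d q where "first_hit i p d q" "routed i q k"
  using assms by (cases rule: routed.cases) auto

definition route_length :: "nat \<Rightarrow> int \<times> int \<Rightarrow> nat" where
  "route_length i p = (LEAST k. routed i p k)"

definition arrow_dir :: "nat \<Rightarrow> int \<times> int \<Rightarrow> dir" where
  "arrow_dir i p = (SOME d. \<exists>q. first_hit i p d q \<and> routed i q (route_length i p - 1))"

definition routing_layout :: layout where
  "routing_layout p =
     (if p \<in> grid m n \<and> \<not> is_sink c sink p then Some (col p, arrow_dir (col p) p) else None)"

lemma arrow_dir_descends:
  assumes i: "i < c" and "routed i p k" and "\<not> is_sink c sink p"
  shows "\<exists>q k'. first_hit i p (arrow_dir i p) q \<and> routed i q k' \<and> k' < k"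
proof -
  have shortest: "routed i p (route_length i p)" "route_length i p \<le> k"
    unfolding route_length_def by (rule LeastI[of _ k], fact, rule Least_le, fact)
  moreover have "route_length i p \<noteq> 0"
  proof
    assume "route_length i p = 0"
    with shortest(1) have "p = sink i" by (simp add: routed_0_imp_sink)
    with assms(3) i show False by (auto simp: is_sink_def)
  qed
  ultimately obtain l where l: "route_length i p = Suc l"
    using not0_implies_Suc by blast
  then have "\<exists>d q. first_hit i p d q \<and> routed i q (route_length i p - 1)"
    using shortest(1) by (metis diff_Suc_1 routed_SucE)
  then have "\<exists>q. first_hit i p (arrow_dir i p) q \<and> routed i q (route_length i p - 1)"
    unfolding arrow_dir_def by (rule someI_ex)
  then show ?thesis using shortest(2) l by (metis Suc_le_lessD diff_Suc_1)
qed

lemma routing_layout_valid: "valid_layout m n c sink routing_layout"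
  using coloring by (auto simp: valid_layout_def routing_layout_def coloring_def split: if_splits)

lemma traj_straight:
  assumes "\<forall>s. 0 < s \<and> s < t \<longrightarrow> col (shift p d (int s)) \<noteq> i"
  shows "s < t \<Longrightarrow> traj routing_layout i (shift p d 1, d) s = (shift p d (int (Suc s)), d)"
proof (induction s)
  case (Suc s)
  then have "eff_dir routing_layout i (shift p d (int (Suc s))) d = d"
    using assms by (auto simp: eff_dir_def routing_layout_def)
  with Suc show ?case by (simp add: traj_Suc pstep_def add.commute)
qed simp

lemma routed_packet_succeeds:
  assumes i: "i < c"
  shows "routed i q k \<Longrightarrow> first_hit i p d q \<Longrightarrow> succeeds m n c sink routing_layout i (shift p d 1, d)"
proof (induction k arbitrary: q p d rule: less_induct)
  case (less k q p d)
  obtain t where t: "0 < t" "q = shift p d (int t)" "q \<in> color_class m n col i"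
    and passed: "\<forall>s. 0 < s \<and> s < t \<longrightarrow> shift p d (int s) \<in> grid m n \<and>
        \<not> is_sink c sink (shift p d (int s)) \<and> col (shift p d (int s)) \<noteq> i"
    using less.prems(2) by (auto simp: first_hit_def)
  have straight: "traj routing_layout i (shift p d 1, d) s = (shift p d (int (Suc s)), d)"
    if "s < t" for s
    using traj_straight[of t p d i s] passed that by blast
  have at_q: "traj routing_layout i (shift p d 1, d) (t - 1) = (q, d)"
    using straight[of "t - 1"] t by simp
  have "succeeds m n c sink routing_layout i (q, d)"
  proof (cases "is_sink c sink q")
    case True
    then have "q = sink i" using sink_in_class_unique t(3) by blast
    then show ?thesis unfolding succeeds_def by (intro exI[of _ 0]) simp
  next
    case False
    then obtain q' k' where "first_hit i q (arrow_dir i q) q'" "routed i q' k'" "k' < k"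
      using arrow_dir_descends[OF i less.prems(1)] by blast
    moreover have "routing_layout q = Some (i, arrow_dir i q)"
      using False t(3) by (auto simp: routing_layout_def color_class_def)
    ultimately have "succeeds m n c sink routing_layout i (traj routing_layout i (q, d) 1)"
      using less.IH by (simp add: traj_Suc pstep_def eff_dir_def Let_def)
    then show ?thesis using succeeds_traj[of _ _ _ _ _ _ "(q, d)" 1] False t(3)
      by (auto simp: color_class_def)
  qed
  moreover have "fst (traj routing_layout i (shift p d 1, d) j) \<in> grid m n \<and>
      \<not> is_sink c sink (fst (traj routing_layout i (shift p d 1, d) j))" if "j < t - 1" for j
    using straight[of j] passed[rule_format, of "Suc j"] that by simp
  ultimately show ?case using succeeds_traj at_q by (metis (no_types, lifting))
qed

lemma routing_layout_perfect: "perfect_layout m n c sink routing_layout"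
  unfolding perfect_layout_def
proof (intro conjI routing_layout_valid allI impI ballI)
  fix i e assume i: "i < c" and e: "e \<in> boundary_edges m n"
  then have "routed_vertex i (Inr e)" by (intro all_vertices_routed) (auto simp: G_vertices_def)
  then obtain r k where "first_hit i (edge_outer_cell e) (snd e) r" "routed i r k"
    by (auto simp: routed_vertex_def)
  then have "succeeds m n c sink routing_layout i (shift (edge_outer_cell e) (snd e) 1, snd e)"
    using routed_packet_succeeds[OF i] by blast
  then show "succeeds m n c sink routing_layout i e" by (simp add: shift_edge_outer_cell)
qed

end

section \<open>The colouring induced by a perfect layout\<close>

definition ray_source :: "vertex \<Rightarrow> int \<times> int" where
  "ray_source v = (case v of Inl q \<Rightarrow> q | Inr e \<Rightarrow> edge_outer_cell e)"

locale perfect_board =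
  fixes m n c :: nat and sink :: "nat \<Rightarrow> int \<times> int" and L :: layout
  assumes board: "board m n c sink"
    and nonempty_colors: "1 \<le> c"
    and perfect: "perfect_layout m n c sink L"
begin

lemma arrow_valid: "L p = Some (a, d) \<Longrightarrow> p \<in> grid m n \<and> \<not> is_sink c sink p \<and> a < c"
  using perfect unfolding perfect_layout_def valid_layout_def by blast

definition reached :: "nat \<Rightarrow> int \<times> int \<Rightarrow> bool" where
  "reached i p \<longleftrightarrow> (\<exists>e\<in>boundary_edges m n. \<exists>j. fst (traj L i e j) = p \<and>
     (\<forall>j'\<le>j. fst (traj L i e j') \<in> grid m n \<and> \<not> is_sink c sink (fst (traj L i e j'))))"

definition exposed :: "nat \<Rightarrow> int \<times> int \<Rightarrow> bool" where
  "exposed i p \<longleftrightarrow> i < c \<and>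
     ((\<exists>e\<in>boundary_edges m n. edge_visible c sink i p e) \<or> cells_visible c sink i p (sink i))"

definition layout_coloring :: "int \<times> int \<Rightarrow> nat" where
  "layout_coloring p =
     (if is_sink c sink p then THE j. j < c \<and> sink j = p
      else case L p of
        Some (a, _) \<Rightarrow> if reached a p then a else SOME i. exposed i p
      | None \<Rightarrow> SOME i. exposed i p)"

lemma layout_coloring_sink: "j < c \<Longrightarrow> layout_coloring (sink j) = j"
  using board
  by (auto simp: layout_coloring_def is_sink_def board_def inj_on_def intro!: the_equality)

lemma exposed_exists:
  assumes p: "p \<in> grid m n" "\<not> is_sink c sink p"
  shows "\<exists>i. exposed i p"
proof (cases "\<exists>s>0. is_sink c sink (shift p North (int s))")
  case True
  define s where "s = (LEAST s. 0 < s \<and> is_sink c sink (shift p North (int s)))"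
  have s: "0 < s \<and> is_sink c sink (shift p North (int s))"
    using True unfolding s_def by (metis (mono_tags, lifting) LeastI)
  then obtain j where j: "j < c" "sink j = shift p North (int s)" by (auto simp: is_sink_def)
  have "clear_ray c sink j p North s"
    using not_less_Least[of _ "\<lambda>s. 0 < s \<and> is_sink c sink (shift p North (int s))"]
    by (auto simp: clear_ray_def s_def dest: other_sink_imp_is_sink)
  then have "cells_visible c sink j p (sink j)"
    using s j by (auto simp: cells_visible_iff_ray)
  then show ?thesis using j by (auto simp: exposed_def)
next
  case False
  define e where "e = ((0::int, snd p), South)"
  have "e \<in> boundary_edges m n" using p by (auto simp: e_def boundary_edges_def grid_def)
  moreover have "edge_visible c sink 0 p e"
    unfolding edge_visible_iff_ray
  proof (intro exI conjI)
    show "p = shift (edge_outer_cell e) (snd e) (int (nat (fst p) + 1))"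
      using p by (auto simp: e_def edge_outer_cell_def shift_simps grid_def)
    show "clear_ray c sink 0 (edge_outer_cell e) (snd e) (nat (fst p) + 1)"
      unfolding clear_ray_def
    proof (intro allI impI)
      fix s assume s: "0 < s \<and> s < nat (fst p) + 1"
      then have "shift (edge_outer_cell e) (snd e) (int s) =
          shift p North (int (nat (fst p) + 1 - s))"
        using p by (auto simp: e_def edge_outer_cell_def shift_simps grid_def)
      moreover have "\<not> is_sink c sink (shift p North (int (nat (fst p) + 1 - s)))"
        using False s by (metis zero_less_diff)
      ultimately show "\<not> other_sink c sink 0 (shift (edge_outer_cell e) (snd e) (int s))"
        using other_sink_imp_is_sink by metis
    qed
  qed simp
  ultimately have "exposed 0 p" using nonempty_colors by (auto simp: exposed_def)
  then show ?thesis ..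
qed

lemma layout_coloring_cases:
  assumes "p \<in> grid m n" "\<not> is_sink c sink p"
  shows "(\<exists>d. L p = Some (layout_coloring p, d) \<and> reached (layout_coloring p) p) \<or>
    exposed (layout_coloring p) p"
proof -
  have "exposed (SOME i. exposed i p) p" using exposed_exists[OF assms] by (rule someI_ex)
  then show ?thesis using assms(2)
    by (cases "L p") (auto simp: layout_coloring_def split: if_splits)
qed

lemma layout_coloring_coloring: "coloring m n c sink layout_coloring"
proof -
  have "layout_coloring p < c" if "p \<in> grid m n" for p
  proof (cases "is_sink c sink p")
    case True
    then show ?thesis by (auto simp: is_sink_def layout_coloring_sink)
  next
    case False
    then show ?thesis
      using layout_coloring_cases[OF that False] arrow_valid[of p "layout_coloring p"]
      by (auto simp: exposed_def)
  qed
  then show ?thesis by (simp add: coloring_def layout_coloring_sink)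
qed

abbreviation G :: "nat \<Rightarrow> vertex \<Rightarrow> vertex \<Rightarrow> bool"
  where "G \<equiv> G_adj m n c sink layout_coloring"

text \<open>The packet state lies on a ray of visibility issued from \<open>v\<close>: the cell of its last
  turn, or its entry edge.\<close>
definition sees_along :: "nat \<Rightarrow> vertex \<Rightarrow> (int \<times> int) \<times> dir \<Rightarrow> bool" where
  "sees_along i v st \<longleftrightarrow>
     (\<exists>t>0. fst st = shift (ray_source v) (snd st) (int t) \<and>
        clear_ray c sink i (ray_source v) (snd st) t) \<and>
     (case v of
        Inl q \<Rightarrow> q \<in> color_class m n layout_coloring i
      | Inr e \<Rightarrow> e \<in> boundary_edges m n \<and> snd e = snd st)"

lemma sees_along_entry: "e \<in> boundary_edges m n \<Longrightarrow> sees_along i (Inr e) e"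
  by (auto simp: sees_along_def ray_source_def shift_edge_outer_cell clear_ray_def
      intro!: exI[of _ 1])

lemma sees_along_turn:
  "x \<in> color_class m n layout_coloring i \<Longrightarrow> sees_along i (Inl x) (shift x d 1, d)"
  by (auto simp: sees_along_def ray_source_def clear_ray_def intro!: exI[of _ 1])

lemma sees_along_straight:
  assumes "sees_along i v (x, d)" "\<not> other_sink c sink i x"
  shows "sees_along i v (shift x d 1, d)"
proof -
  obtain t where "0 < t" "x = shift (ray_source v) d (int t)"
    "clear_ray c sink i (ray_source v) d t"
    using assms(1) by (auto simp: sees_along_def)
  then have "shift x d 1 = shift (ray_source v) d (int (Suc t))"
    and "clear_ray c sink i (ray_source v) d (Suc t)"
    using assms(2) clear_ray_Suc by (auto simp: add.commute)
  then show ?thesis using assms(1) by (auto simp: sees_along_def split: sum.splits)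
qed

lemma sees_along_adj:
  assumes "sees_along i v (x, d)" "x \<in> color_class m n layout_coloring i"
  shows "G i v (Inl x)"
proof (cases v)
  case (Inl q)
  then have "cells_visible c sink i q x"
    using assms(1) by (auto simp: sees_along_def ray_source_def cells_visible_iff_ray)
  then show ?thesis using assms Inl by (auto simp: sees_along_def G_adj_def)
next
  case (Inr e)
  then have "edge_visible c sink i x e"
    using assms(1) by (auto simp: sees_along_def ray_source_def edge_visible_iff_ray)
  then show ?thesis using assms Inr by (auto simp: sees_along_def G_adj_def)
qed

lemma sees_along_pstep:
  assumes x: "x \<in> grid m n" "\<not> is_sink c sink x" and v: "sees_along i v (x, d)"
    and "reached i x"
  shows "\<exists>v'. (G i)\<^sup>*\<^sup>* v v' \<and> sees_along i v' (pstep L i (x, d))"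
proof (cases "\<exists>d'. L x = Some (i, d')")
  case True
  then obtain d' where d': "L x = Some (i, d')" by blast
  then have "x \<in> color_class m n layout_coloring i"
    using x \<open>reached i x\<close> by (simp add: color_class_def layout_coloring_def)
  then have "G i v (Inl x)" "sees_along i (Inl x) (pstep L i (x, d))"
    using sees_along_adj[OF v] sees_along_turn d' by (auto simp: pstep_def eff_dir_def)
  then show ?thesis by blast
next
  case False
  then have "pstep L i (x, d) = (shift x d 1, d)"
    by (auto simp: pstep_def eff_dir_def split: option.split)
  moreover have "\<not> other_sink c sink i x" using x(2) other_sink_imp_is_sink by blast
  ultimately show ?thesis using sees_along_straight[OF v] by auto
qed

lemma traj_sees_along:
  assumes e: "e \<in> boundary_edges m n"
  shows "\<forall>j'<j. fst (traj L i e j') \<in> grid m n \<and> \<not> is_sink c sink (fst (traj L i e j'))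
    \<Longrightarrow> \<exists>v. (G i)\<^sup>*\<^sup>* (Inr e) v \<and> sees_along i v (traj L i e j)"
proof (induction j)
  case 0
  then show ?case using sees_along_entry[OF e] by auto
next
  case (Suc j)
  obtain x d where xd: "traj L i e j = (x, d)" by fastforce
  have x: "x \<in> grid m n" "\<not> is_sink c sink x" using Suc.prems xd by (metis fst_conv lessI)+
  have "reached i x"
    unfolding reached_def using e xd Suc.prems by (metis fst_conv le_imp_less_Suc)
  obtain v where path: "(G i)\<^sup>*\<^sup>* (Inr e) v" and v: "sees_along i v (x, d)"
    using Suc xd by (metis less_SucI)
  obtain v' where "(G i)\<^sup>*\<^sup>* v v'" "sees_along i v' (pstep L i (x, d))"
    using sees_along_pstep[OF x v \<open>reached i x\<close>] by blast
  then show ?case using path rtranclp_trans[OF path] by (auto simp: traj_Suc xd)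
qed

lemma traj_connected:
  assumes "e \<in> boundary_edges m n"
    and "\<forall>j'<j. fst (traj L i e j') \<in> grid m n \<and> \<not> is_sink c sink (fst (traj L i e j'))"
    and "fst (traj L i e j) \<in> color_class m n layout_coloring i"
  shows "(G i)\<^sup>*\<^sup>* (Inr e) (Inl (fst (traj L i e j)))"
proof -
  obtain v where "(G i)\<^sup>*\<^sup>* (Inr e) v" "sees_along i v (fst (traj L i e j), snd (traj L i e j))"
    using traj_sees_along[OF assms(1,2)] by auto
  then show ?thesis using sees_along_adj assms(3) by (metis rtranclp.rtrancl_into_rtrancl)
qed

lemma sink_in_layout_class: "i < c \<Longrightarrow> sink i \<in> color_class m n layout_coloring i"
  using board by (auto simp: color_class_def board_def layout_coloring_sink)

lemma boundary_connected_to_sink: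
  assumes "i < c" "e \<in> boundary_edges m n"
  shows "(G i)\<^sup>*\<^sup>* (Inr e) (Inl (sink i))"
proof -
  obtain k where "fst (traj L i e k) = sink i"
    and "\<forall>j<k. fst (traj L i e j) \<in> grid m n \<and> \<not> is_sink c sink (fst (traj L i e j))"
    using perfect assms unfolding perfect_layout_def succeeds_def by blast
  then show ?thesis using traj_connected[OF assms(2)] sink_in_layout_class[OF assms(1)] by metis
qed

lemma reached_connected_to_boundary:
  assumes "reached i p" "p \<in> color_class m n layout_coloring i"
  shows "\<exists>e\<in>boundary_edges m n. (G i)\<^sup>*\<^sup>* (Inr e) (Inl p)"
  using assms traj_connected unfolding reached_def by (metis le_less)

lemma G_rtranclp_commute: "(G i)\<^sup>*\<^sup>* u v \<Longrightarrow> (G i)\<^sup>*\<^sup>* v u"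
  by (rule sympD[OF symp_rtranclp[OF symp_G_adj]])

lemma connected_to_sink:
  assumes i: "i < c" and v: "v \<in> G_vertices m n layout_coloring i"
  shows "(G i)\<^sup>*\<^sup>* v (Inl (sink i))"
proof (cases v)
  case (Inr e)
  then show ?thesis using v boundary_connected_to_sink[OF i] by (auto simp: G_vertices_def)
next
  case (Inl p)
  then have p: "p \<in> color_class m n layout_coloring i" using v by (auto simp: G_vertices_def)
  consider "is_sink c sink p" | "reached i p" | "\<exists>e\<in>boundary_edges m n. edge_visible c sink i p e"
    | "cells_visible c sink i p (sink i)"
    using layout_coloring_cases[of p] p by (auto simp: color_class_def exposed_def)
  then show ?thesis
  proof cases
    case 1
    then show ?thesis using Inl p layout_coloring_sink by (auto simp: is_sink_def color_class_def)
  next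
    case 2
    then show ?thesis
      using Inl p reached_connected_to_boundary G_rtranclp_commute boundary_connected_to_sink[OF i]
      by (meson rtranclp_trans)
  next
    case 3
    then obtain e where "e \<in> boundary_edges m n" "G i (Inl p) (Inr e)"
      using p by (auto simp: G_adj_def)
    then show ?thesis
      using Inl boundary_connected_to_sink[OF i] converse_rtranclp_into_rtranclp by metis
  next
    case 4
    then have "G i (Inl p) (Inl (sink i))"
      using p sink_in_layout_class[OF i] by (simp add: G_adj_def)
    then show ?thesis using Inl by auto
  qed
qed

lemma layout_coloring_connected: "i < c \<Longrightarrow> G_connected m n c sink layout_coloring i"
  unfolding G_connected_def
  using connected_to_sink G_rtranclp_commute by (metis rtranclp_trans)

end

theorem mainTheorem8:
  fixes m n c :: nat and sink :: "nat \<Rightarrow> int \<times> int"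
  assumes "board m n c sink" and "1 \<le> c"
  shows "(\<exists>L. perfect_layout m n c sink L) \<longleftrightarrow>
         (\<exists>col. coloring m n c sink col \<and> (\<forall>i<c. G_connected m n c sink col i))"
proof
  assume "\<exists>L. perfect_layout m n c sink L"
  then obtain L where "perfect_layout m n c sink L" ..
  then interpret perfect_board m n c sink L using assms by unfold_locales
  show "\<exists>col. coloring m n c sink col \<and> (\<forall>i<c. G_connected m n c sink col i)"
    using layout_coloring_coloring layout_coloring_connected by blast
next
  assume "\<exists>col. coloring m n c sink col \<and> (\<forall>i<c. G_connected m n c sink col i)"
  then obtain col where "coloring m n c sink col" "\<forall>i<c. G_connected m n c sink col i" by blast
  then interpret connected_coloring m n c sink col using assms by unfold_locales
  show "\<exists>L. perfect_layout m n c sink L" using routing_layout_perfect by blast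
qed

end
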